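(* Let $\mathcal{G}$ be a connected hypergraph with spectral radius $\rho$ and principal eigenvector $X=(x_v)$. Let $k\ge 3$ and let $e_0,e_1,e_2$ be edges of $\mathcal{G}$ with $e_0=\{v_1,v_2,\dots,v_{k-1},v_k\}$, such that $\deg_{\mathcal{G}}(v_2)=\cdots=\deg_{\mathcal{G}}(v_{k-1})=1$, $e_1\cap e_0=\{v_1\}$ and $e_2\cap e_0=\{v_k\}$. Then $$x_{v_2}=x_{v_3}=\cdots=x_{v_{k-1}}=\frac{x_{v_1}+x_{v_k}}{(k-1)\rho-(k-3)}<\min\{x_{v_1},x_{v_k}\}.$$
   Context: A hypergraph has a finite vertex set and distinct edges (subsets with at least two vertices); $\deg_{\mathcal{G}}(v)$ is the number of edges containing $v$. The adjacency matrix has $(\mathcal{A}_{\mathcal{G}})_{ij}=\sum_{e\ni i,j}\frac{1}{|e|-1}$ for $i\ne j$ and $0$ on the diagonal; $\rho$ is its spectral radius. For connected $\mathcal{G}$ the principal eigenvector is the unique positive eigenvector $X$ of $\mathcal{A}_{\mathcal{G}}$ for $\rho$ with $\sum_v x_v^2=1$. *)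

theory Defs
  imports Complex_Main
begin

definition hypergraph :: "'a set \<Rightarrow> 'a set set \<Rightarrow> bool" where
  "hypergraph V E \<longleftrightarrow> finite V \<and> (\<forall>e\<in>E. e \<subseteq> V \<and> card e \<ge> 2)"

definition hdeg :: "'a set set \<Rightarrow> 'a \<Rightarrow> nat" where
  "hdeg E v = card {e \<in> E. v \<in> e}"

definition hadj :: "'a set set \<Rightarrow> 'a \<Rightarrow> 'a \<Rightarrow> real" where
  "hadj E i j = (if i = j then 0
     else (\<Sum>e\<in>{e \<in> E. i \<in> e \<and> j \<in> e}. 1 / (real (card e) - 1)))"

definition hconnected :: "'a set \<Rightarrow> 'a set set \<Rightarrow> bool" where
  "hconnected V E \<longleftrightarrow> V \<noteq> {} \<and>
     (\<forall>u\<in>V. \<forall>w\<in>V. (\<lambda>a b. \<exists>e\<in>E. a \<in> e \<and> b \<in> e)\<^sup>*\<^sup>* u w)"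

definition hadj_eigenvalue :: "'a set \<Rightarrow> 'a set set \<Rightarrow> complex \<Rightarrow> bool" where
  "hadj_eigenvalue V E mu \<longleftrightarrow> (\<exists>x :: 'a \<Rightarrow> complex. (\<exists>v\<in>V. x v \<noteq> 0) \<and>
     (\<forall>i\<in>V. (\<Sum>j\<in>V. complex_of_real (hadj E i j) * x j) = mu * x i))"

definition hspectral_radius :: "'a set \<Rightarrow> 'a set set \<Rightarrow> real" where
  "hspectral_radius V E = Max {cmod mu | mu. hadj_eigenvalue V E mu}"

definition principal_eigenvector :: "'a set \<Rightarrow> 'a set set \<Rightarrow> ('a \<Rightarrow> real) \<Rightarrow> bool" where
  "principal_eigenvector V E X \<longleftrightarrow>
     (\<forall>v\<in>V. X v > 0) \<and> (\<Sum>v\<in>V. (X v)\<^sup>2) = 1 \<and>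
     (\<forall>i\<in>V. (\<Sum>j\<in>V. hadj E i j * X j) = hspectral_radius V E * X i)"

end

theory Submission
  imports Defs
begin

text \<open>The eigenvalue equation at a vertex u reads rho x(u) = sum over the edges e
  containing u of (S(e) - x(u)) / (|e| - 1), where S(e) is the sum of x over e.
  At a vertex of degree one in an edge e of size k this says x(u) ((k-1) rho + 1) = S(e),
  so the pendant vertices v(2), ..., v(k-1) of e0 all carry the value y = S(e0) / ((k-1) rho + 1).
  At v(1) and v(k) the further edges e1, e2 contribute positive terms, turning the equation
  into a strict inequality, so x(v(1)), x(v(k)) > y. Substituting
  S(e0) = x(v(1)) + x(v(k)) + (k-2) y into the definition of y gives the formula for y.\<close>

lemma hypergraph_finite_edges:
  assumes "hypergraph V E"
  shows "finite E"
proof -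
  have "E \<subseteq> Pow V" using assms by (auto simp: hypergraph_def)
  with assms show ?thesis by (auto simp: hypergraph_def intro: finite_subset)
qed

lemma hadj_mult_sum_eq:
  assumes "hypergraph V E" and "u \<in> V"
  shows "(\<Sum>j\<in>V. hadj E u j * X j) =
    (\<Sum>e\<in>{e\<in>E. u \<in> e}. (sum X e - X u) / (real (card e) - 1))"
proof -
  have finV: "finite V" and sub: "\<forall>e\<in>E. e \<subseteq> V"
    using assms(1) by (auto simp: hypergraph_def)
  have finE: "finite {e\<in>E. u \<in> e}"
    using hypergraph_finite_edges[OF assms(1)] by simp
  let ?w = "\<lambda>e j. if j \<in> e then X j / (real (card e) - 1) else 0"
  have "(\<Sum>j\<in>V. hadj E u j * X j) = (\<Sum>j\<in>V-{u}. hadj E u j * X j)"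
    using sum.remove[OF finV assms(2), of "\<lambda>j. hadj E u j * X j"] by (simp add: hadj_def)
  also have "\<dots> = (\<Sum>j\<in>V-{u}. \<Sum>e\<in>{e\<in>E. u \<in> e}. ?w e j)"
  proof (rule sum.cong[OF refl])
    fix j assume "j \<in> V-{u}"
    have "(\<Sum>e\<in>{e\<in>E. u \<in> e}. ?w e j) = (\<Sum>e\<in>{e' \<in> {e\<in>E. u \<in> e}. j \<in> e'}. X j / (real (card e) - 1))"
      by (rule sum.inter_filter[OF finE, symmetric])
    also have "{e' \<in> {e\<in>E. u \<in> e}. j \<in> e'} = {e\<in>E. u \<in> e \<and> j \<in> e}" by auto
    finally show "hadj E u j * X j = (\<Sum>e\<in>{e\<in>E. u \<in> e}. ?w e j)"
      using \<open>j \<in> V-{u}\<close> by (auto simp: hadj_def sum_distrib_right)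
  qed
  also have "\<dots> = (\<Sum>e\<in>{e\<in>E. u \<in> e}. \<Sum>j\<in>V-{u}. ?w e j)"
    by (rule sum.swap)
  also have "\<dots> = (\<Sum>e\<in>{e\<in>E. u \<in> e}. (sum X e - X u) / (real (card e) - 1))"
  proof (rule sum.cong[OF refl])
    fix e assume e: "e \<in> {e\<in>E. u \<in> e}"
    then have "e \<subseteq> V" using sub by auto
    then have "{j \<in> V-{u}. j \<in> e} = e - {u}" and "finite e"
      using finV finite_subset by auto
    have "(\<Sum>j\<in>V-{u}. ?w e j) = (\<Sum>j\<in>{j \<in> V-{u}. j \<in> e}. X j / (real (card e) - 1))"
      using finV by (intro sum.inter_filter[symmetric]) simp
    also have "\<dots> = (sum X e - X u) / (real (card e) - 1)"
      using e \<open>finite e\<close> \<open>{j \<in> V-{u}. j \<in> e} = e - {u}\<close>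
      by (simp add: sum_divide_distrib[symmetric] sum_diff1)
    finally show "(\<Sum>j\<in>V-{u}. ?w e j) = (sum X e - X u) / (real (card e) - 1)" .
  qed
  finally show ?thesis .
qed

lemma eigenvector_pendant_vertex:
  assumes "hypergraph V E" and eig: "\<forall>i\<in>V. (\<Sum>j\<in>V. hadj E i j * X j) = \<rho> * X i"
    and "e \<in> E" and "u \<in> e" and "hdeg E u = 1"
  shows "X u * ((real (card e) - 1) * \<rho> + 1) = sum X e"
proof -
  have "card {e\<in>E. u \<in> e} = 1" using assms(5) by (simp add: hdeg_def)
  then have edges_u: "{e\<in>E. u \<in> e} = {e}"
    using assms(3,4) by (metis (mono_tags, lifting) card_1_singletonE mem_Collect_eq singletonD)
  have "card e \<ge> 2" and "u \<in> V"
    using assms(1,3,4) by (auto simp: hypergraph_def)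
  moreover have "\<rho> * X u = (sum X e - X u) / (real (card e) - 1)"
    using eig hadj_mult_sum_eq[OF assms(1) \<open>u \<in> V\<close>, of X] edges_u \<open>u \<in> V\<close> by simp
  ultimately show ?thesis by (simp add: field_simps)
qed

lemma eigenvector_vertex_in_two_edges:
  assumes "hypergraph V E" and eig: "\<forall>i\<in>V. (\<Sum>j\<in>V. hadj E i j * X j) = \<rho> * X i"
    and pos: "\<forall>i\<in>V. X i > 0"
    and "e \<in> E" and "e' \<in> E" and "e' \<noteq> e" and "u \<in> e" and "u \<in> e'"
  shows "X u * ((real (card e) - 1) * \<rho> + 1) > sum X e"
proof -
  have finV: "finite V" and sub: "\<forall>e\<in>E. e \<subseteq> V" and big: "\<forall>e\<in>E. card e \<ge> 2"
    using assms(1) by (auto simp: hypergraph_def)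
  have finE: "finite {e\<in>E. u \<in> e}"
    using hypergraph_finite_edges[OF assms(1)] by simp
  have "u \<in> V" using sub assms(4,7) by auto
  let ?m = "\<lambda>e. (sum X e - X u) / (real (card e) - 1)"
  have m_pos: "?m f > 0" if "f \<in> E" "u \<in> f" for f
  proof -
    have "f \<subseteq> V" "card f \<ge> 2" using that sub big by auto
    then have "finite f" using finV finite_subset by blast
    then have "card (f - {u}) > 0" using \<open>card f \<ge> 2\<close> that(2) by simp
    then have "f - {u} \<noteq> {}" by (metis card.empty less_irrefl)
    then have "sum X (f - {u}) > 0"
      using \<open>finite f\<close> \<open>f \<subseteq> V\<close> pos by (intro sum_pos) auto
    with \<open>finite f\<close> \<open>card f \<ge> 2\<close> that(2) show ?thesis by (simp add: sum_diff1)
  qed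
  have "?m e + ?m e' = (\<Sum>f\<in>{e, e'}. ?m f)" using assms(6) by simp
  also have "\<dots> \<le> (\<Sum>f\<in>{e\<in>E. u \<in> e}. ?m f)"
    using assms(4,5,7,8) m_pos by (intro sum_mono2[OF finE]) (auto intro: less_imp_le)
  also have "\<dots> = \<rho> * X u"
    using eig hadj_mult_sum_eq[OF assms(1) \<open>u \<in> V\<close>, of X] \<open>u \<in> V\<close> by simp
  finally have "?m e < \<rho> * X u" using m_pos[OF assms(5,8)] by simp
  moreover have "card e \<ge> 2" using big assms(4) by simp
  ultimately show ?thesis by (simp add: field_simps)
qed

lemma sum_atLeastAtMost_split_ends:
  fixes g :: "nat \<Rightarrow> 'b::comm_monoid_add"
  assumes "k \<ge> 2"
  shows "(\<Sum>i\<in>{1..k}. g i) = g 1 + g k + (\<Sum>i\<in>{2..k-1}. g i)"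
proof -
  have "{1..k} = insert 1 (insert k {2..k-1})" using assms by auto
  then show ?thesis using assms by (simp add: add.assoc)
qed

lemma eigenvector_pendant_vertices_value:
  assumes "hypergraph V E" and eig: "\<forall>i\<in>V. (\<Sum>j\<in>V. hadj E i j * X j) = \<rho> * X i"
    and pos: "\<forall>i\<in>V. X i > 0" and "k \<ge> 3" and "e0 \<in> E"
    and "inj_on v {1..k}" and "e0 = v ` {1..k}"
    and "\<forall>i\<in>{2..k-1}. hdeg E (v i) = 1"
  shows "(real k - 1) * \<rho> + 1 > 0"
    and "\<And>i. i \<in> {2..k-1} \<Longrightarrow> X (v i) = sum X e0 / ((real k - 1) * \<rho> + 1)"
proof -
  have "card e0 = k" using card_image[OF assms(6)] assms(7) by simp
  have "e0 \<subseteq> V" using assms(1,5) by (auto simp: hypergraph_def)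
  then have "v 2 \<in> V" using assms(4,7) by auto
  have pendant: "X (v i) * ((real k - 1) * \<rho> + 1) = sum X e0" if "i \<in> {2..k-1}" for i
    using eigenvector_pendant_vertex[OF assms(1) eig assms(5)] that assms(7,8) \<open>card e0 = k\<close>
    by auto
  have "sum X e0 > 0"
    using \<open>e0 \<subseteq> V\<close> \<open>card e0 = k\<close> \<open>k \<ge> 3\<close> pos
    by (intro sum_pos) (auto intro: card_ge_0_finite)
  moreover have "X (v 2) > 0" using pos \<open>v 2 \<in> V\<close> by simp
  moreover have "X (v 2) * ((real k - 1) * \<rho> + 1) = sum X e0" using pendant assms(4) by simp
  ultimately show D_pos: "(real k - 1) * \<rho> + 1 > 0" by (metis zero_less_mult_pos)
  show "X (v i) = sum X e0 / ((real k - 1) * \<rho> + 1)" if "i \<in> {2..k-1}" for i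
    using pendant[OF that] D_pos by (simp add: field_simps)
qed

lemma eigenvector_pendant_edge:
  assumes "hypergraph V E" and eig: "\<forall>i\<in>V. (\<Sum>j\<in>V. hadj E i j * X j) = \<rho> * X i"
    and pos: "\<forall>i\<in>V. X i > 0" and "k \<ge> 3"
    and "e0 \<in> E" and "e1 \<in> E" and "e2 \<in> E"
    and "inj_on v {1..k}" and "e0 = v ` {1..k}"
    and "\<forall>i\<in>{2..k-1}. hdeg E (v i) = 1"
    and "e1 \<inter> e0 = {v 1}" and "e2 \<inter> e0 = {v k}"
  shows "\<forall>i\<in>{2..k-1}. X (v i) = (X (v 1) + X (v k)) / ((real k - 1) * \<rho> - (real k - 3))
    \<and> (X (v 1) + X (v k)) / ((real k - 1) * \<rho> - (real k - 3)) < min (X (v 1)) (X (v k))"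
proof -
  define D where "D = (real k - 1) * \<rho> + 1"
  define y where "y = sum X e0 / D"
  note pendant_value = eigenvector_pendant_vertices_value[OF assms(1-5,8-10), folded D_def y_def]
  have "card e0 = k" using card_image[OF assms(8)] assms(9) by simp
  have "e0 \<subseteq> V" using assms(1,5) by (auto simp: hypergraph_def)
  then have "v 1 \<in> V" "v k \<in> V" using assms(4,9) by auto
  have end_gt: "X u > y" if "e \<in> E" "e \<inter> e0 = {u}" for u e
  proof -
    have "e \<noteq> e0" using that(2) \<open>card e0 = k\<close> \<open>k \<ge> 3\<close> by auto
    then have "X u * D > sum X e0"
      using eigenvector_vertex_in_two_edges[OF assms(1) eig pos assms(5) that(1)] that(2)
        \<open>card e0 = k\<close> by (auto simp: D_def)
    with pendant_value(1) show ?thesis by (simp add: y_def field_simps)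
  qed
  have "D * y = sum X e0" using pendant_value(1) by (simp add: y_def)
  also have "\<dots> = (\<Sum>i\<in>{1..k}. X (v i))"
    using sum.reindex[OF assms(8), of X] assms(9) by simp
  also have "\<dots> = X (v 1) + X (v k) + (\<Sum>i\<in>{2..k-1}. X (v i))"
    using sum_atLeastAtMost_split_ends[of k] assms(4) by simp
  also have "(\<Sum>i\<in>{2..k-1}. X (v i)) = (real k - 2) * y"
    using pendant_value(2) assms(4) by (simp add: of_nat_diff)
  finally have y_eq: "((real k - 1) * \<rho> - (real k - 3)) * y = X (v 1) + X (v k)"
    by (simp add: D_def algebra_simps)
  moreover have "X (v 1) > 0" "X (v k) > 0" using pos \<open>v 1 \<in> V\<close> \<open>v k \<in> V\<close> by simp_all
  ultimately have "(real k - 1) * \<rho> - (real k - 3) \<noteq> 0" by auto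
  with y_eq have "y = (X (v 1) + X (v k)) / ((real k - 1) * \<rho> - (real k - 3))"
    by (simp add: eq_divide_eq mult.commute)
  then show ?thesis
    using pendant_value(2) end_gt[OF assms(6,11)] end_gt[OF assms(7,12)] by auto
qed

theorem lemma3p6:
  fixes V :: "'a set" and E :: "'a set set" and X :: "'a \<Rightarrow> real"
    and k :: nat and v :: "nat \<Rightarrow> 'a" and e0 e1 e2 :: "'a set"
  assumes "hypergraph V E" and "hconnected V E"
    and "principal_eigenvector V E X"
    and "k \<ge> 3"
    and "e0 \<in> E" and "e1 \<in> E" and "e2 \<in> E"
    and "inj_on v {1..k}" and "e0 = v ` {1..k}"
    and "\<forall>i\<in>{2..k-1}. hdeg E (v i) = 1"
    and "e1 \<inter> e0 = {v 1}" and "e2 \<inter> e0 = {v k}"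
  shows "\<forall>i\<in>{2..k-1}. X (v i) = (X (v 1) + X (v k)) /
            ((real k - 1) * hspectral_radius V E - (real k - 3))
         \<and> (X (v 1) + X (v k)) / ((real k - 1) * hspectral_radius V E - (real k - 3))
            < min (X (v 1)) (X (v k))"
proof -
  \<comment> \<open>Connectivity is only needed for the principal eigenvector to exist; here it is given.\<close>
  have "\<forall>i\<in>V. X i > 0"
    and "\<forall>i\<in>V. (\<Sum>j\<in>V. hadj E i j * X j) = hspectral_radius V E * X i"
    using assms(3) by (auto simp: principal_eigenvector_def)
  then show ?thesis
    using eigenvector_pendant_edge[OF assms(1)] assms(4-12) by blast
qed

end
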